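(* Let $V$ be an $\hbar$-adic nonlocal vertex algebra and let $u,v\in V$, $c^{(r)}\in V$ ($r\in\mathbb N$) with $\lim_{r\to\infty}c^{(r)}=0$ $\hbar$-adically, and $\beta(x),f(x),g(x)\in\mathbb{C}((x))[[\hbar]]$, such that $$Y(u,x_1)Y(v,x_2)-\beta(x_2-x_1)Y(v,x_2)Y(u,x_1)=f(x_1-x_2)+g(x_2-x_1)+\sum_{r\ge0}Y(c^{(r)},x_2)\frac{1}{r!}\Big(\frac{\partial}{\partial x_2}\Big)^rx_1^{-1}\delta\Big(\frac{x_2}{x_1}\Big).$$ Then $$Y(u,x_1)Y(v,x_2)\sim\beta(x_2-x_1)Y(v,x_2)Y(u,x_1)+f(-x_2+x_1)+g(x_2-x_1)$$ and $$Y(u,x)^-v=f(x)^-{\bf 1}+\sum_{r\ge0}c^{(r)}x^{-r-1}.$$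
   Context: An $\hbar$-adic nonlocal vertex algebra is a topologically free $\mathbb{C}[[\hbar]]$-module $V$ (i.e. isomorphic to $V_0[[\hbar]]$) with ${\bf 1}\in V$ and a $\mathbb{C}[[\hbar]]$-linear $Y(\cdot,x):V\to(\mathrm{End}V)[[x^{\pm1}]]$, $Y(v,x)=\sum v_nx^{-n-1}$, such that reductions mod $\hbar^n$ of $Y(u,x)w$ lie in $(V/\hbar^nV)((x))$, $Y({\bf 1},x)=1$, $Y(v,x){\bf 1}\in V[[x]]$ with constant term $v$, and for $u,v,w$ and each $n\ge1$ there is $l$ with $(z+y)^lY(u,z+y)Y(v,y)w\equiv(z+y)^lY(Y(u,z)v,y)w$ mod $\hbar^nV[[z^{\pm1},y^{\pm1}]]$. Conventions: $\delta(x)=\sum_{n\in\mathbb Z}x^n$; a scalar series $h(x)$ placed in an operator identity means $h\cdot\mathrm{id}_V$; $f(x_1-x_2)$ is expanded in nonnegative powers of $x_2$, while $f(-x_2+x_1)$, $g(x_2-x_1)$ and $\beta(x_2-x_1)$ are expanded in nonnegative powers of $x_1$. For $F,G\in(\mathrm{End}V)[[x_1^{\pm1},x_2^{\pm1}]]$, $F\sim G$ means: for every $n\ge1$ there is $k\ge0$ with $(x_1-x_2)^kF\equiv(x_1-x_2)^kG$ modulo $\hbar^n(\mathrm{End}V)[[x_1^{\pm1},x_2^{\pm1}]]$. $Y(u,x)^-=\sum_{n\ge0}u_nx^{-n-1}$ and, for $f(x)=\sum_nf_nx^n\in\mathbb{C}((x))[[\hbar]]$, $f(x)^-=\sum_{n<0}f_nx^n$.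 *)

theory Defs
  imports Complex_Main "HOL-Computational_Algebra.Formal_Power_Series"
    "HOL-Library.Function_Algebras"
begin

text \<open>Model: V = V0[[h]] is represented by functions nat => 'v (coefficient of h^p),
  where V0 = 'v is a complex vector space with scalar multiplication sc.
  A series in C((x))[[h]] is represented by its x-coefficients int => complex fps.\<close>

type_synonym 'v hser = "nat \<Rightarrow> 'v"

definition cscale :: "(complex \<Rightarrow> 'v \<Rightarrow> 'v) \<Rightarrow> complex \<Rightarrow> 'v hser \<Rightarrow> 'v hser" where
  "cscale sc c w = (\<lambda>p. sc c (w p))"

definition hsmult :: "(complex \<Rightarrow> 'v::ab_group_add \<Rightarrow> 'v) \<Rightarrow> complex fps \<Rightarrow> 'v hser \<Rightarrow> 'v hser" where
  "hsmult sc a w = (\<lambda>p. \<Sum>q\<le>p. sc (fps_nth a q) (w (p - q)))"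

definition hcong :: "nat \<Rightarrow> 'v hser \<Rightarrow> 'v hser \<Rightarrow> bool" where
  "hcong n x y \<longleftrightarrow> (\<forall>p<n. x p = y p)"

text \<open>h-adically convergent sum of a family (for summable families, i.e. each
  h-coefficient has finitely many nonzero contributions).\<close>
definition hsum :: "('i \<Rightarrow> 'v::comm_monoid_add hser) \<Rightarrow> 'v hser" where
  "hsum F = (\<lambda>p. \<Sum>i\<in>{i. F i p \<noteq> 0}. F i p)"

definition hlinear :: "(complex \<Rightarrow> 'v::ab_group_add \<Rightarrow> 'v) \<Rightarrow> ('v hser \<Rightarrow> 'v hser) \<Rightarrow> bool" where
  "hlinear sc \<phi> \<longleftrightarrow> (\<forall>x y. \<phi> (x + y) = \<phi> x + \<phi> y) \<and> (\<forall>a x. \<phi> (hsmult sc a x) = hsmult sc a (\<phi> x))"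

text \<open>Elements of C((x))[[h]]: every h-coefficient is a Laurent series in x.\<close>
definition hlaurent :: "(int \<Rightarrow> complex fps) \<Rightarrow> bool" where
  "hlaurent f \<longleftrightarrow> (\<forall>p. \<exists>N. \<forall>n<N. fps_nth (f n) p = 0)"

text \<open>h-adic nonlocal vertex algebra structure; Y v m = v_m.\<close>
definition hnva :: "(complex \<Rightarrow> 'v::ab_group_add \<Rightarrow> 'v) \<Rightarrow> 'v hser \<Rightarrow>
    ('v hser \<Rightarrow> int \<Rightarrow> 'v hser \<Rightarrow> 'v hser) \<Rightarrow> bool" where
  "hnva sc vac Y \<longleftrightarrow>
     vector_space sc \<and>
     (\<forall>v m. hlinear sc (Y v m)) \<and> (\<forall>m w. hlinear sc (\<lambda>v. Y v m w)) \<and>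
     (\<forall>u w n. \<exists>M. \<forall>m\<ge>M. hcong n (Y u m w) 0) \<and>
     (\<forall>m w. Y vac m w = (if m = -1 then w else 0)) \<and>
     (\<forall>v. (\<forall>m\<ge>0. Y v m vac = 0) \<and> Y v (-1) vac = v) \<and>
     (\<forall>u v w n. n \<ge> 1 \<longrightarrow> (\<exists>l::nat. \<forall>a b::int.
        hcong n
          (\<Sum>i\<le>l. cscale sc (of_nat (l choose i))
              (hsum (\<lambda>j::nat. cscale sc ((of_int (a - int i + int j)) gchoose j)
                  (Y u (- (a - int i) - 1 - int j) (Y v (int j - (b - int (l - i)) - 1) w)))))
          (\<Sum>i\<le>l. cscale sc (of_nat (l choose i))
              (Y (Y u (- (a - int i) - 1) v) (- (b - int (l - i)) - 1) w))))"

text \<open>Coefficient of x1^a x2^b of f(x1-x2) (expanded in nonnegative powers of x2).\<close>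
definition ser_12 :: "(int \<Rightarrow> complex fps) \<Rightarrow> int \<Rightarrow> int \<Rightarrow> complex fps" where
  "ser_12 f a b = (if b \<ge> 0 then fps_const ((-1) ^ nat b * ((of_int (a + b)) gchoose nat b)) * f (a + b) else 0)"

text \<open>Coefficient of x1^a x2^b of g(x2-x1) (expanded in nonnegative powers of x1).\<close>
definition ser_21 :: "(int \<Rightarrow> complex fps) \<Rightarrow> int \<Rightarrow> int \<Rightarrow> complex fps" where
  "ser_21 g a b = (if a \<ge> 0 then fps_const ((-1) ^ nat a * ((of_int (a + b)) gchoose nat a)) * g (a + b) else 0)"

text \<open>Coefficient of x1^a x2^b of f(-x2+x1) (expanded in nonnegative powers of x1).\<close>
definition ser_m21 :: "(int \<Rightarrow> complex fps) \<Rightarrow> int \<Rightarrow> int \<Rightarrow> complex fps" where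
  "ser_m21 f a b = (if a \<ge> 0 then fps_const ((-1) ^ nat \<bar>b\<bar> * ((of_int (a + b)) gchoose nat a)) * f (a + b) else 0)"

text \<open>Coefficient of x1^a x2^b of beta(x2-x1) Y(v,x2) Y(u,x1) w.\<close>
definition beta_prod :: "(complex \<Rightarrow> 'v::ab_group_add \<Rightarrow> 'v) \<Rightarrow> ('v hser \<Rightarrow> int \<Rightarrow> 'v hser \<Rightarrow> 'v hser) \<Rightarrow>
    (int \<Rightarrow> complex fps) \<Rightarrow> 'v hser \<Rightarrow> 'v hser \<Rightarrow> 'v hser \<Rightarrow> int \<Rightarrow> int \<Rightarrow> 'v hser" where
  "beta_prod sc Y \<beta> u v w a b =
     hsum (\<lambda>(j::nat, c::int). hsmult sc (ser_21 \<beta> (int j) c)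
        (Y v (- (b - c) - 1) (Y u (- (a - int j) - 1) w)))"

text \<open>Coefficient of x1^a x2^b of sum_r Y(c^(r),x2) (1/r!) (d/dx2)^r x1^-1 delta(x2/x1), applied to w.\<close>
definition delta_term :: "(complex \<Rightarrow> 'v::ab_group_add \<Rightarrow> 'v) \<Rightarrow> ('v hser \<Rightarrow> int \<Rightarrow> 'v hser \<Rightarrow> 'v hser) \<Rightarrow>
    (nat \<Rightarrow> 'v hser) \<Rightarrow> 'v hser \<Rightarrow> int \<Rightarrow> int \<Rightarrow> 'v hser" where
  "delta_term sc Y c w a b =
     hsum (\<lambda>r::nat. cscale sc ((of_int (- a - 1)) gchoose r) (Y (c r) (- a - b - int r - 2) w))"

text \<open>Coefficient of x1^a x2^b of (x1-x2)^k F.\<close>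
definition mul_diff :: "(complex \<Rightarrow> 'v::ab_group_add \<Rightarrow> 'v) \<Rightarrow> nat \<Rightarrow> (int \<Rightarrow> int \<Rightarrow> 'v hser) \<Rightarrow> int \<Rightarrow> int \<Rightarrow> 'v hser" where
  "mul_diff sc k F a b = (\<Sum>i\<le>k. cscale sc (of_nat (k choose i) * (-1) ^ (k - i)) (F (a - int i) (b - int (k - i))))"

end

theory Submission
  imports Defs
begin

(* Multiplying the commutator formula by (x1 - x2)^k turns each coefficient into a k-th
   finite difference. The delta-function terms with r < k die because the k-th difference
   of the polynomial i -> (x + i) gchoose r of degree r < k vanishes, and those with r >= R
   are already 0 modulo h^n, since c^(r) -> 0. The f-term becomes the expansion of x^k f(x)
   at x = x1 - x2; once k exceeds the pole order of f modulo h^n this is a power series,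
   and for power series the two expansions f(x1 - x2) and f(-x2 + x1) agree (the binomial
   symmetry (N choose b) = (N choose a) for a + b = N). The formula for Y(u,x)^- v is the
   coefficient of x1^(-r-1) x2^0 of the commutator formula applied to the vacuum: by the
   creation property the beta-term and every summand of the delta-sum except the r-th
   vanish, and g(x2 - x1) has no negative powers of x1. *)

lemma sum_alternating_binomial_Suc:
  fixes F :: "nat \<Rightarrow> 'a::comm_ring_1"
  shows "(\<Sum>i\<le>Suc k. of_nat (Suc k choose i) * (-1) ^ (Suc k - i) * F i)
       = (\<Sum>i\<le>k. of_nat (k choose i) * (-1) ^ (k - i) * (F (Suc i) - F i))"
proof -
  have shifted: "(\<Sum>i\<le>k. of_nat (k choose Suc i) * (-1) ^ (k - i) * F (Suc i))
      = - (\<Sum>i\<le>k. of_nat (k choose i) * (-1) ^ (k - i) * F i) + (-1) ^ k * F 0"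
  proof (cases k)
    case (Suc m)
    have "(\<Sum>i\<le>k. of_nat (k choose i) * (-1) ^ (k - i) * F i)
        = (-1) ^ k * F 0 + (\<Sum>i\<le>m. of_nat (k choose Suc i) * (-1) ^ (k - Suc i) * F (Suc i))"
      unfolding Suc sum.atMost_Suc_shift by simp
    also have "(\<Sum>i\<le>m. of_nat (k choose Suc i) * (-1) ^ (k - Suc i) * F (Suc i))
        = - (\<Sum>i\<le>k. of_nat (k choose Suc i) * (-1) ^ (k - i) * F (Suc i))"
      unfolding Suc by (simp add: sum.atMost_Suc sum_negf[symmetric] Suc_diff_le binomial_eq_0)
    finally show ?thesis by simp
  qed simp
  have "(\<Sum>i\<le>Suc k. of_nat (Suc k choose i) * (-1) ^ (Suc k - i) * F i)
      = - ((-1) ^ k * F 0) + (\<Sum>i\<le>k. of_nat (k choose i) * (-1) ^ (k - i) * F (Suc i))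
        + (\<Sum>i\<le>k. of_nat (k choose Suc i) * (-1) ^ (k - i) * F (Suc i))"
    unfolding sum.atMost_Suc_shift by (simp add: distrib_right sum.distrib)
  then show ?thesis
    using shifted by (simp add: right_diff_distrib sum_subtractf)
qed

lemma sum_alternating_binomial_gchoose:
  fixes x :: "'a::field_char_0"
  assumes "r < k"
  shows "(\<Sum>i\<le>k. of_nat (k choose i) * (-1) ^ (k - i) * ((x + of_nat i) gchoose r)) = 0"
  using assms
proof (induction k arbitrary: r)
  case (Suc k)
  show ?case
  proof (cases r)
    case 0
    then show ?thesis
      unfolding sum_alternating_binomial_Suc by simp
  next
    case (Suc s)
    have "((x + of_nat (Suc i)) gchoose r) - ((x + of_nat i) gchoose r) = (x + of_nat i) gchoose s"
      for i
      using gbinomial_Suc_Suc[of "x + of_nat i" s] by (simp add: Suc add_ac)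
    then have "(\<Sum>i\<le>Suc k. of_nat (Suc k choose i) * (-1) ^ (Suc k - i) * ((x + of_nat i) gchoose r))
        = (\<Sum>i\<le>k. of_nat (k choose i) * (-1) ^ (k - i) * ((x + of_nat i) gchoose s))"
      unfolding sum_alternating_binomial_Suc by simp
    also have "\<dots> = 0"
      using Suc.IH Suc.prems Suc by simp
    finally show ?thesis .
  qed
qed simp

lemma sum_binomial_gbinomial_int:
  fixes M :: "'a::field_char_0" and t :: int
  shows "(\<Sum>i\<le>k. of_nat (k choose i) * (if int i \<le> t then M gchoose nat (t - int i) else 0))
       = (if 0 \<le> t then (of_nat k + M) gchoose nat t else 0)"
proof (cases "0 \<le> t")
  case True
  define T where "T = nat t"
  have "(\<Sum>i\<le>k. of_nat (k choose i) * (if int i \<le> t then M gchoose nat (t - int i) else 0))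
      = (\<Sum>i\<le>T. of_nat (k choose i) * (M gchoose (T - i)))"
    using True by (intro sum.mono_neutral_cong) (auto simp: T_def binomial_eq_0 nat_diff_distrib)
  also have "\<dots> = (of_nat k + M) gchoose T"
    using gbinomial_Vandermonde[of "of_nat k" M T]
    by (simp add: binomial_gbinomial atMost_atLeast0)
  finally show ?thesis
    using True T_def by simp
qed simp

lemma sum_fps_const_mult_common_factor:
  fixes c s :: "'i \<Rightarrow> 'a::semiring_0"
  assumes "\<And>i. i \<in> A \<Longrightarrow> F i = fps_const (s i) * G"
  shows "(\<Sum>i\<in>A. fps_const (c i) * F i) = fps_const (\<Sum>i\<in>A. c i * s i) * G"
proof -
  have "(\<Sum>i\<in>A. fps_const (c i) * F i) = (\<Sum>i\<in>A. fps_const (c i) * (fps_const (s i) * G))"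
    using assms by (intro sum.cong) simp_all
  also have "\<dots> = fps_const (\<Sum>i\<in>A. c i * s i) * G"
    by (simp add: fps_eq_iff fps_sum_nth sum_distrib_right mult.assoc)
  finally show ?thesis .
qed

lemma minus_one_power_nat_abs_diff:
  "(-1 :: 'a::ring_1) ^ j * (-1) ^ nat \<bar>b - int j\<bar> = (-1) ^ nat \<bar>b\<bar>"
proof -
  have "even (j + nat \<bar>b - int j\<bar>) \<longleftrightarrow> even (nat \<bar>b\<bar>)"
    by (simp add: even_nat_iff even_add) presburger
  then show ?thesis
    by (simp add: power_add[symmetric] minus_one_power_iff)
qed

(* In generating-function terms: (x1 - x2)^k f(x1 - x2) is x^k f(x) expanded at x = x1 - x2,
   and the same holds for the expansion f(-x2 + x1). *)

lemma sum_ser_12_shift: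
  "(\<Sum>i\<le>k. fps_const (of_nat (k choose i) * (-1) ^ (k - i))
              * ser_12 f (a - int i) (b - int (k - i)))
   = ser_12 (\<lambda>N. f (N - int k)) a b" (is "?lhs = _")
proof -
  define M :: complex where "M = of_int (a + b - int k)"
  define s where
    "s i = (if 0 \<le> b - int i then (-1) ^ nat (b - int i) * (M gchoose nat (b - int i)) else 0)"
    for i
  have "?lhs = fps_const (\<Sum>i\<le>k. of_nat (k choose i) * (-1) ^ (k - i) * s (k - i))
               * f (a + b - int k)"
  proof (rule sum_fps_const_mult_common_factor)
    fix i assume "i \<in> {..k}"
    then have shift: "a - int i + (b - int (k - i)) = a + b - int k"
      by simp
    show "ser_12 f (a - int i) (b - int (k - i)) = fps_const (s (k - i)) * f (a + b - int k)"
      unfolding ser_12_def s_def M_def shift by simp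
  qed
  also have "(\<Sum>i\<le>k. of_nat (k choose i) * (-1) ^ (k - i) * s (k - i))
      = (\<Sum>j\<le>k. of_nat (k choose j) * (-1) ^ j * s j)"
    by (rule sum.reindex_bij_witness[where i="\<lambda>i. k - i" and j="\<lambda>i. k - i"])
      (auto simp: binomial_symmetric[symmetric])
  also have "\<dots> = (-1) ^ nat b
      * (\<Sum>j\<le>k. of_nat (k choose j) * (if int j \<le> b then M gchoose nat (b - int j) else 0))"
    unfolding sum_distrib_left s_def
    by (rule sum.cong) (auto simp: power_add[symmetric] nat_diff_distrib)
  also have "\<dots> = (if 0 \<le> b then (-1) ^ nat b * (of_int (a + b) gchoose nat b) else 0)"
    by (simp add: sum_binomial_gbinomial_int M_def)
  finally show ?thesis
    by (simp add: ser_12_def)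
qed

lemma sum_ser_m21_shift:
  "(\<Sum>i\<le>k. fps_const (of_nat (k choose i) * (-1) ^ (k - i))
              * ser_m21 f (a - int i) (b - int (k - i)))
   = ser_m21 (\<lambda>N. f (N - int k)) a b" (is "?lhs = _")
proof -
  define M :: complex where "M = of_int (a + b - int k)"
  define s where
    "s i = (if 0 \<le> a - int i
            then (-1) ^ nat \<bar>b - int (k - i)\<bar> * (M gchoose nat (a - int i)) else 0)"
    for i
  have "?lhs = fps_const (\<Sum>i\<le>k. of_nat (k choose i) * (-1) ^ (k - i) * s i) * f (a + b - int k)"
  proof (rule sum_fps_const_mult_common_factor)
    fix i assume "i \<in> {..k}"
    then have shift: "a - int i + (b - int (k - i)) = a + b - int k"
      by simp
    show "ser_m21 f (a - int i) (b - int (k - i)) = fps_const (s i) * f (a + b - int k)"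
      unfolding ser_m21_def s_def M_def shift by simp
  qed
  also have "(\<Sum>i\<le>k. of_nat (k choose i) * (-1) ^ (k - i) * s i)
      = (-1) ^ nat \<bar>b\<bar>
        * (\<Sum>i\<le>k. of_nat (k choose i) * (if int i \<le> a then M gchoose nat (a - int i) else 0))"
    unfolding sum_distrib_left
  proof (rule sum.cong[OF refl])
    fix i
    have "(-1) ^ (k - i) * (-1) ^ nat \<bar>b - int (k - i)\<bar> = (-1 :: complex) ^ nat \<bar>b\<bar>"
      by (rule minus_one_power_nat_abs_diff)
    then show "of_nat (k choose i) * (-1) ^ (k - i) * s i = (-1) ^ nat \<bar>b\<bar>
        * (of_nat (k choose i) * (if int i \<le> a then M gchoose nat (a - int i) else 0))"
      by (auto simp: s_def mult_ac)
  qed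
  also have "\<dots> = (if 0 \<le> a then (-1) ^ nat \<bar>b\<bar> * (of_int (a + b) gchoose nat a) else 0)"
    by (simp add: sum_binomial_gbinomial_int M_def)
  finally show ?thesis
    by (simp add: ser_m21_def)
qed

lemma fps_nth_ser_12_eq_ser_m21:
  assumes "\<forall>N<0. fps_nth (f N) q = 0"
  shows "fps_nth (ser_12 f a b) q = fps_nth (ser_m21 f a b) q"
proof (cases "a + b < 0")
  case True
  then show ?thesis
    using assms by (simp add: ser_12_def ser_m21_def)
next
  case False
  define N where "N = nat (a + b)"
  have N: "(of_int (a + b) :: complex) = of_nat N"
    using False by (simp add: N_def)
  have coeff: "(if 0 \<le> b then (-1) ^ nat b * of_nat (N choose nat b) else 0)
      = (if 0 \<le> a then (-1) ^ nat \<bar>b\<bar> * of_nat (N choose nat a) else (0 :: complex))"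
  proof (cases "0 \<le> a \<and> 0 \<le> b")
    case True
    then have "nat a \<le> N" and "N - nat a = nat b"
      by (auto simp: N_def)
    then have "N choose nat b = N choose nat a"
      using binomial_symmetric[of "nat a" N] by simp
    then show ?thesis
      using True by simp
  qed (use False in \<open>auto simp: N_def binomial_eq_0\<close>)
  have "fps_nth (ser_12 f a b) q
      = (if 0 \<le> b then (-1) ^ nat b * of_nat (N choose nat b) else 0) * fps_nth (f (a + b)) q"
    unfolding ser_12_def N binomial_gbinomial by simp
  moreover have "fps_nth (ser_m21 f a b) q
      = (if 0 \<le> a then (-1) ^ nat \<bar>b\<bar> * of_nat (N choose nat a) else 0) * fps_nth (f (a + b)) q"
    unfolding ser_m21_def N binomial_gbinomial by simp
  ultimately show ?thesis
    by (simp only: coeff)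
qed

lemma hlaurent_shift_power_series:
  assumes "hlaurent f"
  shows "\<exists>K. \<forall>k\<ge>K. \<forall>q<n. \<forall>N<0. fps_nth (f (N - int k)) q = 0"
proof -
  obtain Nf where Nf: "\<And>q m. m < Nf q \<Longrightarrow> fps_nth (f m) q = 0"
    using assms unfolding hlaurent_def by metis
  define K where "K = (\<Sum>q<n. nat (- Nf q))"
  have bound: "- Nf q \<le> int K" if "q < n" for q
  proof -
    have "nat (- Nf q) \<le> K"
      unfolding K_def using that by (intro member_le_sum) auto
    then show ?thesis
      by linarith
  qed
  have "fps_nth (f (N - int k)) q = 0" if "K \<le> k" and "q < n" and "N < 0" for k q N
    using bound[OF \<open>q < n\<close>] that by (intro Nf) linarith
  then show ?thesis
    by blast
qed

lemma sum_fun_apply: "(\<Sum>i\<in>A. F i) x = (\<Sum>i\<in>A. F i x)"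
  by (induction A rule: infinite_finite_induct) auto

lemma hsum_apply_finite_support:
  assumes "finite S" and "\<And>r. r \<notin> S \<Longrightarrow> F r p = 0"
  shows "hsum F p = (\<Sum>r\<in>S. F r p)"
proof -
  have "(\<Sum>r\<in>S. F r p) = (\<Sum>r\<in>{r. F r p \<noteq> 0}. F r p)"
    by (rule sum.mono_neutral_right) (use assms in auto)
  then show ?thesis
    unfolding hsum_def by simp
qed

lemma hcong_refl [simp]: "hcong n x x"
  by (simp add: hcong_def)

lemma hcong_add: "hcong n x x' \<Longrightarrow> hcong n y y' \<Longrightarrow> hcong n (x + y) (x' + y')"
  by (simp add: hcong_def)

lemma hcong_hsmult:
  assumes "\<forall>q<n. fps_nth s q = fps_nth t q"
  shows "hcong n (hsmult sc s w) (hsmult sc t w)"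
  using assms by (simp add: hcong_def hsmult_def)

lemma hlinear_zero: "hlinear sc \<phi> \<Longrightarrow> \<phi> 0 = 0"
  unfolding hlinear_def by (metis add_cancel_right_left add_0)

lemma (in module) sum_scale_sum_swap:
  assumes "finite A" and "finite B"
  shows "(\<Sum>i\<in>A. scale (c i) (\<Sum>j\<in>B. scale (s i j) (x j)))
       = (\<Sum>j\<in>B. scale (\<Sum>i\<in>A. c i * s i j) (x j))"
proof -
  have "(\<Sum>i\<in>A. scale (c i) (\<Sum>j\<in>B. scale (s i j) (x j))) = (\<Sum>i\<in>A. \<Sum>j\<in>B. scale (c i * s i j) (x j))"
    by (simp add: scale_sum_right)
  also have "\<dots> = (\<Sum>j\<in>B. \<Sum>i\<in>A. scale (c i * s i j) (x j))"
    by (rule sum.swap)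
  also have "\<dots> = (\<Sum>j\<in>B. scale (\<Sum>i\<in>A. c i * s i j) (x j))"
    by (simp add: scale_sum_left)
  finally show ?thesis .
qed

locale coefficient_space = vector_space sc for sc :: "complex \<Rightarrow> 'v::ab_group_add \<Rightarrow> 'v"
begin

lemma hsmult_zero_left [simp]: "hsmult sc 0 w = 0"
  by (simp add: hsmult_def fun_eq_iff)

lemma hsmult_zero_right [simp]: "hsmult sc s 0 = 0"
  by (simp add: hsmult_def fun_eq_iff)

lemma hsmult_fps_X_power: "hsmult sc (fps_X ^ n) w = (\<lambda>p. if n \<le> p then w (p - n) else 0)"
proof
  fix p
  have "hsmult sc (fps_X ^ n) w p = (\<Sum>q\<le>p. if q = n then w (p - q) else 0)"
    unfolding hsmult_def by (rule sum.cong) auto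
  then show "hsmult sc (fps_X ^ n) w p = (if n \<le> p then w (p - n) else 0)"
    by (simp add: sum.delta)
qed

lemma hlinear_hcong_zero:
  assumes "hlinear sc \<phi>" and "hcong n x 0"
  shows "hcong n (\<phi> x) 0"
proof -
  have "x = hsmult sc (fps_X ^ n) (\<lambda>p. x (p + n))"
    using assms(2) by (auto simp: hsmult_fps_X_power hcong_def)
  then have "\<phi> x = hsmult sc (fps_X ^ n) (\<phi> (\<lambda>p. x (p + n)))"
    using assms(1) unfolding hlinear_def by metis
  then show ?thesis
    by (simp add: hsmult_fps_X_power hcong_def)
qed

lemma mul_diff_apply:
  "mul_diff sc k F a b p
   = (\<Sum>i\<le>k. sc (of_nat (k choose i) * (-1) ^ (k - i)) (F (a - int i) (b - int (k - i)) p))"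
  unfolding mul_diff_def cscale_def sum_fun_apply ..

lemma mul_diff_add:
  "mul_diff sc k (\<lambda>a b. F a b + G a b) a b = mul_diff sc k F a b + mul_diff sc k G a b"
  by (simp add: fun_eq_iff mul_diff_apply scale_right_distrib sum.distrib)

lemma mul_diff_hsmult:
  "mul_diff sc k (\<lambda>a b. hsmult sc (s a b) w) a b
   = hsmult sc (\<Sum>i\<le>k. fps_const (of_nat (k choose i) * (-1) ^ (k - i))
                              * s (a - int i) (b - int (k - i))) w"
  by (simp add: fun_eq_iff mul_diff_apply hsmult_def sum_scale_sum_swap fps_sum_nth)

lemma mul_diff_ser_12_hcong_ser_m21:
  assumes "\<forall>q<n. \<forall>N<0. fps_nth (f (N - int k)) q = 0"
  shows "hcong n (mul_diff sc k (\<lambda>a b. hsmult sc (ser_12 f a b) w) a b)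
                 (mul_diff sc k (\<lambda>a b. hsmult sc (ser_m21 f a b) w) a b)"
  unfolding mul_diff_hsmult sum_ser_12_shift sum_ser_m21_shift
  using assms by (intro hcong_hsmult) (simp add: fps_nth_ser_12_eq_ser_m21)

lemma mul_diff_delta_term_hcong_zero:
  assumes "R \<le> k" and small: "\<And>r m. R \<le> r \<Longrightarrow> hcong n (Y (c r) m w) 0"
  shows "hcong n (mul_diff sc k (delta_term sc Y c w) a b) 0"
  unfolding hcong_def
proof (intro allI impI)
  fix p assume "p < n"
  have vanish: "Y (c r) m w p = 0" if "R \<le> r" for r m
    using small[OF that] \<open>p < n\<close> by (simp add: hcong_def)
  define Z where "Z r = Y (c r) (- a - b + int k - int r - 2) w p" for r
  have delta: "delta_term sc Y c w (a - int i) (b - int (k - i)) p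
      = (\<Sum>r<R. sc ((of_int (- a - 1) + of_nat i) gchoose r) (Z r))" if "i \<le> k" for i
  proof -
    have mode: "- (a - int i) - (b - int (k - i)) - int r - 2 = - a - b + int k - int r - 2" for r
      using that by simp
    have upper: "(of_int (- (a - int i) - 1) :: complex) = of_int (- a - 1) + of_nat i"
      by simp
    have "delta_term sc Y c w (a - int i) (b - int (k - i)) p
        = (\<Sum>r<R. sc (of_int (- (a - int i) - 1) gchoose r)
                     (Y (c r) (- (a - int i) - (b - int (k - i)) - int r - 2) w p))"
      unfolding delta_term_def
      by (subst hsum_apply_finite_support[of "{..<R}"]) (auto simp: cscale_def vanish)
    then show ?thesis
      by (simp only: mode upper Z_def)
  qed
  have "mul_diff sc k (delta_term sc Y c w) a b p
      = (\<Sum>i\<le>k. sc (of_nat (k choose i) * (-1) ^ (k - i))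
           (\<Sum>r<R. sc ((of_int (- a - 1) + of_nat i) gchoose r) (Z r)))"
    unfolding mul_diff_apply by (rule sum.cong[OF refl]) (simp only: atMost_iff delta)
  also have "\<dots> = (\<Sum>r<R. sc (\<Sum>i\<le>k. of_nat (k choose i) * (-1) ^ (k - i)
                              * ((of_int (- a - 1) + of_nat i) gchoose r)) (Z r))"
    by (rule sum_scale_sum_swap) auto
  also have "\<dots> = 0"
    using \<open>R \<le> k\<close> by (intro sum.neutral) (simp add: sum_alternating_binomial_gchoose)
  finally show "mul_diff sc k (delta_term sc Y c w) a b p = 0 p"
    by simp
qed

lemma weak_commutativity_from_commutator:
  assumes lin: "\<And>m w. hlinear sc (\<lambda>v. Y v m w)"
    and hc: "\<forall>n. \<exists>R. \<forall>r\<ge>R. hcong n (c r) 0"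
    and hf: "hlaurent f"
    and hcomm: "\<forall>w a b.
       Y u (- a - 1) (Y v (- b - 1) w) - beta_prod sc Y \<beta> u v w a b
       = hsmult sc (ser_12 f a b) w + hsmult sc (ser_21 g a b) w + delta_term sc Y c w a b"
  shows "\<exists>k::nat. \<forall>w a b.
            hcong n (mul_diff sc k (\<lambda>a b. Y u (- a - 1) (Y v (- b - 1) w)) a b)
                    (mul_diff sc k (\<lambda>a b. beta_prod sc Y \<beta> u v w a b
                        + hsmult sc (ser_m21 f a b) w + hsmult sc (ser_21 g a b) w) a b)"
proof -
  obtain R where R: "\<And>r. R \<le> r \<Longrightarrow> hcong n (c r) 0"
    using hc by blast
  obtain K where K: "\<forall>k\<ge>K. \<forall>q<n. \<forall>N<0. fps_nth (f (N - int k)) q = 0"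
    using hlaurent_shift_power_series[OF hf] by blast
  define k where "k = max R K"
  show ?thesis
  proof (intro exI allI)
    fix w a b
    have expand: "(\<lambda>a b. Y u (- a - 1) (Y v (- b - 1) w))
        = (\<lambda>a b. beta_prod sc Y \<beta> u v w a b + (hsmult sc (ser_12 f a b) w
                 + hsmult sc (ser_21 g a b) w + delta_term sc Y c w a b))"
    proof (rule ext, rule ext)
      fix a b
      have "Y u (- a - 1) (Y v (- b - 1) w) - beta_prod sc Y \<beta> u v w a b
          = hsmult sc (ser_12 f a b) w + hsmult sc (ser_21 g a b) w + delta_term sc Y c w a b"
        using hcomm by blast
      then show "Y u (- a - 1) (Y v (- b - 1) w) = beta_prod sc Y \<beta> u v w a b
          + (hsmult sc (ser_12 f a b) w + hsmult sc (ser_21 g a b) w + delta_term sc Y c w a b)"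
        by (metis add.commute diff_add_cancel)
    qed
    have small: "hcong n (Y (c r) m w) 0" if "R \<le> r" for r m
      using hlinear_hcong_zero[OF lin R[OF that]] by simp
    have f_part: "hcong n (mul_diff sc k (\<lambda>a b. hsmult sc (ser_12 f a b) w) a b)
                          (mul_diff sc k (\<lambda>a b. hsmult sc (ser_m21 f a b) w) a b)"
      using K by (intro mul_diff_ser_12_hcong_ser_m21) (simp add: k_def)
    have delta_part: "hcong n (mul_diff sc k (delta_term sc Y c w) a b) 0"
      by (rule mul_diff_delta_term_hcong_zero[where R = R and Y = Y and c = c and w = w])
        (simp_all add: k_def small)
    have "hcong n (mul_diff sc k (\<lambda>a b. beta_prod sc Y \<beta> u v w a b) a b
                   + (mul_diff sc k (\<lambda>a b. hsmult sc (ser_12 f a b) w) a b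
                      + mul_diff sc k (\<lambda>a b. hsmult sc (ser_21 g a b) w) a b
                      + mul_diff sc k (delta_term sc Y c w) a b))
                  (mul_diff sc k (\<lambda>a b. beta_prod sc Y \<beta> u v w a b) a b
                   + (mul_diff sc k (\<lambda>a b. hsmult sc (ser_m21 f a b) w) a b
                      + mul_diff sc k (\<lambda>a b. hsmult sc (ser_21 g a b) w) a b + 0))"
      by (intro hcong_add hcong_refl f_part delta_part)
    then show "hcong n (mul_diff sc k (\<lambda>a b. Y u (- a - 1) (Y v (- b - 1) w)) a b)
                    (mul_diff sc k (\<lambda>a b. beta_prod sc Y \<beta> u v w a b
                        + hsmult sc (ser_m21 f a b) w + hsmult sc (ser_21 g a b) w) a b)"
      unfolding expand mul_diff_add by (simp add: add.assoc)
  qed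
qed

lemma beta_prod_vacuum:
  assumes creation: "\<And>v m. 0 \<le> m \<Longrightarrow> Y v m vac = 0" and Y_zero: "\<And>v m. Y v m 0 = 0"
    and "a < 0"
  shows "beta_prod sc Y \<beta> u v vac a b = 0"
proof -
  have "(\<lambda>(j::nat, c::int). hsmult sc (ser_21 \<beta> (int j) c)
          (Y v (- (b - c) - 1) (Y u (- (a - int j) - 1) vac))) = (\<lambda>_. 0)"
    using \<open>a < 0\<close> by (auto simp: creation Y_zero)
  then show ?thesis
    by (simp add: beta_prod_def hsum_def zero_fun_def)
qed

lemma delta_term_vacuum:
  assumes creation: "\<And>v m. 0 \<le> m \<Longrightarrow> Y v m vac = 0" and vacuum: "\<And>v. Y v (-1) vac = v"
  shows "delta_term sc Y c vac (- int r - 1) 0 = c r"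
proof
  fix p
  let ?F = "\<lambda>s::nat. cscale sc (of_int (int r) gchoose s) (Y (c s) (int r - int s - 1) vac)"
  have "?F s p = 0" if "s \<noteq> r" for s
  proof (cases "s < r")
    case True
    then show ?thesis
      by (simp add: cscale_def creation)
  next
    case False
    then have "(of_int (int r) :: complex) gchoose s = 0"
      using that by (simp add: binomial_gbinomial[symmetric] binomial_eq_0)
    then show ?thesis
      by (simp add: cscale_def)
  qed
  then have "delta_term sc Y c vac (- int r - 1) 0 p = ?F r p"
    unfolding delta_term_def by (subst hsum_apply_finite_support[of "{r}"]) auto
  also have "\<dots> = c r p"
    by (simp add: cscale_def vacuum binomial_gbinomial[symmetric])
  finally show "delta_term sc Y c vac (- int r - 1) 0 p = c r p" .
qed

lemma singular_part_from_commutator: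
  assumes hV: "hnva sc vac Y"
    and hcomm: "\<forall>w a b.
       Y u (- a - 1) (Y v (- b - 1) w) - beta_prod sc Y \<beta> u v w a b
       = hsmult sc (ser_12 f a b) w + hsmult sc (ser_21 g a b) w + delta_term sc Y c w a b"
  shows "Y u (int r) v = hsmult sc (f (- int r - 1)) vac + c r"
proof -
  have creation: "\<And>v m. 0 \<le> m \<Longrightarrow> Y v m vac = 0" and vacuum: "\<And>v. Y v (-1) vac = v"
    and Y_zero: "\<And>v m. Y v m 0 = 0"
    using hV hlinear_zero unfolding hnva_def by auto
  define a where "a = - int r - 1"
  have "a < 0"
    by (simp add: a_def)
  have "Y u (- a - 1) (Y v (- 0 - 1) vac) - beta_prod sc Y \<beta> u v vac a 0
      = hsmult sc (ser_12 f a 0) vac + hsmult sc (ser_21 g a 0) vac + delta_term sc Y c vac a 0"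
    using hcomm by blast
  moreover have "beta_prod sc Y \<beta> u v vac a 0 = 0"
    using creation Y_zero \<open>a < 0\<close> by (rule beta_prod_vacuum)
  moreover have "delta_term sc Y c vac a 0 = c r"
    unfolding a_def using creation vacuum by (rule delta_term_vacuum)
  ultimately show ?thesis
    by (simp add: a_def vacuum ser_12_def ser_21_def)
qed

end

theorem lemma3p37:
  fixes sc :: "complex \<Rightarrow> 'v::ab_group_add \<Rightarrow> 'v"
    and vac u v :: "'v hser"
    and Y :: "'v hser \<Rightarrow> int \<Rightarrow> 'v hser \<Rightarrow> 'v hser"
    and c :: "nat \<Rightarrow> 'v hser"
    and \<beta> f g :: "int \<Rightarrow> complex fps"
  assumes hV: "hnva sc vac Y"
    and hc: "\<forall>n. \<exists>R. \<forall>r\<ge>R. hcong n (c r) 0"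
    and h\<beta>: "hlaurent \<beta>" and hf: "hlaurent f" and hg: "hlaurent g"
    and hcomm: "\<forall>w a b.
       Y u (- a - 1) (Y v (- b - 1) w) - beta_prod sc Y \<beta> u v w a b
       = hsmult sc (ser_12 f a b) w + hsmult sc (ser_21 g a b) w + delta_term sc Y c w a b"
  shows "(\<forall>n\<ge>1. \<exists>k::nat. \<forall>w a b.
            hcong n (mul_diff sc k (\<lambda>a b. Y u (- a - 1) (Y v (- b - 1) w)) a b)
                    (mul_diff sc k (\<lambda>a b. beta_prod sc Y \<beta> u v w a b
                        + hsmult sc (ser_m21 f a b) w + hsmult sc (ser_21 g a b) w) a b))
       \<and> (\<forall>r::nat. Y u (int r) v = hsmult sc (f (- int r - 1)) vac + c r)"
proof -
  interpret coefficient_space sc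
    using hV by (simp add: hnva_def coefficient_space_def)
  have "\<And>m w. hlinear sc (\<lambda>v. Y v m w)"
    using hV by (simp add: hnva_def)
  then show ?thesis
    using weak_commutativity_from_commutator[OF _ hc hf hcomm]
      singular_part_from_commutator[OF hV hcomm] by blast
qed

end
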